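(* For every $m\in\mathbb N$ there exist $L_3(m)\in\mathbb N$ and $K_3(m)\in\mathbb N$ such that whenever $\varepsilon_1,\dots,\varepsilon_m\in\{\pm1\}$ and $i_1,\dots,i_m>K_3(m)$ are integers, then either $$\varepsilon_1a_{i_1}+\dots+\varepsilon_ma_{i_m}=\varepsilon_1\eta^{i_1}+\dots+\varepsilon_m\eta^{i_m}=0,$$ or $$|\varepsilon_1a_{i_1}+\dots+\varepsilon_ma_{i_m}|\ge\eta^{\min\{i_1,\dots,i_m\}-L_3(m)}.$$ Moreover, $L_3(m)$ and $K_3(m)$ can be chosen to be increasing in $m$.
   Context: Standing setting: $d\in\mathbb N$; $\lambda_1,\dots,\lambda_d\in\mathbb C$ are the roots of an irreducible polynomial of degree $d$ with integer coefficients; $c_1,\dots,c_d\in\mathbb C$; the dominant root condition holds: $\lambda_1$ is real, $\lambda_1>1$, $\lambda_1>\max\{|\lambda_2|,\dots,|\lambda_d|\}$, $c_1\ne0$; $a_n=c_1\lambda_1^n+\dots+c_d\lambda_d^n$ is a positive integer for every $n\in\mathbb N$; and $\eta:=\lambda_1$. *)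

theory Defs
  imports Complex_Main "HOL-Computational_Algebra.Computational_Algebra"
begin

definition lrs :: "nat \<Rightarrow> (nat \<Rightarrow> complex) \<Rightarrow> (nat \<Rightarrow> complex) \<Rightarrow> nat \<Rightarrow> complex" where
  "lrs d c lam n = (\<Sum>i=1..d. c i * lam i ^ n)"

end

theory Submission
  imports Defs
begin

(* If the dominant part T = \<Sum> eps_j eta^(i_j) of a signed sum vanishes, then the polynomial
   \<Sum> eps_j X^(i_j) vanishes at eta, hence by irreducibility at every root lam_i, so the whole
   signed sum of the a_(i_j) vanishes. If all indices lie in a window [n, n + B], then
   T = eta^n v with v in a finite set of values of small integer polynomials at eta, so a
   nonzero T is at least a constant times eta^n, while the other roots contribute only
   O(theta^n) with theta < eta. In general, by pigeonhole some gap of length G above the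
   smallest index contains no index. The indices above the gap form a shorter sum, handled by
   induction on the number of terms: if it vanishes, the remaining indices lie in a window;
   otherwise, G being large, it outweighs everything below the gap. *)

lemma map_poly_of_int_add:
  "map_poly (of_int :: int \<Rightarrow> 'a::comm_ring_1) (f + g) = map_poly of_int f + map_poly of_int g"
  by (intro poly_eqI) (simp add: coeff_map_poly)

lemma map_poly_of_int_mult:
  "map_poly (of_int :: int \<Rightarrow> 'a::comm_ring_1) (f * g) = map_poly of_int f * map_poly of_int g"
  by (intro poly_eqI) (simp add: coeff_map_poly coeff_mult)

lemma poly_map_poly_of_int_sum_monom:
  "poly (map_poly (of_int :: int \<Rightarrow> 'a::comm_ring_1) (\<Sum>j\<in>J. monom (e j) (k j))) z =
     (\<Sum>j\<in>J. of_int (e j) * z ^ k j)"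
  by (induction J rule: infinite_finite_induct)
     (simp_all add: map_poly_of_int_add map_poly_monom poly_monom)

lemma int_poly_min_degree_smult_dvd:
  fixes f g :: "int poly" and z :: complex
  assumes f: "f \<noteq> 0" "poly (map_poly of_int f) z = 0"
    and g: "poly (map_poly of_int g) z = 0"
    and min: "\<And>h. h \<noteq> 0 \<Longrightarrow> poly (map_poly of_int h) z = 0 \<Longrightarrow> degree f \<le> degree h"
  obtains c s where "c \<noteq> 0" "smult c g = f * s"
proof -
  obtain s r where sr: "pseudo_divmod g f = (s, r)" by force
  define c where "c = lead_coeff f ^ (Suc (degree g) - degree f)"
  have eq: "smult c g = f * s + r" and r: "r = 0 \<or> degree r < degree f"
    using pseudo_divmod[OF f(1) sr] by (auto simp: c_def)
  have "poly (map_poly (of_int :: int \<Rightarrow> complex) r) z = 0"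
    using arg_cong[OF eq, of "\<lambda>h. poly (map_poly of_int h) z"] f g
    by (simp add: map_poly_of_int_add map_poly_of_int_mult map_poly_smult)
  with r min have "r = 0" by force
  moreover have "c \<noteq> 0" using f by (simp add: c_def)
  ultimately show thesis using that eq by simp
qed

lemma irreducible_int_poly_min_degree:
  fixes p h :: "int poly" and z :: complex
  assumes irr: "irreducible p" and p: "poly (map_poly of_int p) z = 0"
    and h: "h \<noteq> 0" "poly (map_poly of_int h) z = 0"
  shows "degree p \<le> degree h"
proof -
  obtain f where "f \<noteq> 0 \<and> poly (map_poly of_int f) z = 0"
    and min: "\<And>h'. h' \<noteq> 0 \<and> poly (map_poly of_int h') z = 0 \<Longrightarrow> degree f \<le> degree h'"
    using ex_has_least_nat[of "\<lambda>f. f \<noteq> 0 \<and> poly (map_poly of_int f) z = 0" h degree] h by blast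
  then have f: "f \<noteq> 0" "poly (map_poly of_int f) z = 0" by auto
  obtain c s where cs: "c \<noteq> 0" "smult c p = f * s"
    using int_poly_min_degree_smult_dvd[OF f p] min by blast
  have "\<not> p dvd s"
  proof
    assume "p dvd s"
    then obtain t where "s = p * t" by (elim dvdE)
    with cs have "p * [:c:] = p * (f * t)" by (simp add: ac_simps)
    moreover have "p \<noteq> 0" using irr by auto
    ultimately have "[:c:] = f * t" by (metis mult_left_cancel)
    with cs(1) have "t \<noteq> 0" by auto
    with \<open>[:c:] = f * t\<close> f(1) have "degree f = 0"
      by (metis add_is_0 degree_mult_eq degree_pCons_0)
    with f show False by (auto elim!: degree_eq_zeroE simp: map_poly_pCons)
  qed
  moreover have "p dvd f * s" using cs(2) by (metis dvd_smult dvd_refl)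
  ultimately have "p dvd f" using irr prime_elem_dvd_mult_iff irreducible_imp_prime_elem by blast
  then have "degree p \<le> degree f" using f(1) by (simp add: dvd_imp_degree_le)
  with min h show ?thesis by force
qed

lemma irreducible_int_poly_shared_roots:
  fixes p q :: "int poly" and z w :: complex
  assumes irr: "irreducible p" and pz: "poly (map_poly of_int p) z = 0"
    and pw: "poly (map_poly of_int p) w = 0" and qz: "poly (map_poly of_int q) z = 0"
  shows "poly (map_poly of_int q) w = 0"
proof -
  have "p \<noteq> 0" using irr by auto
  then obtain c s where cs: "c \<noteq> 0" "smult c q = p * s"
    using int_poly_min_degree_smult_dvd[OF _ pz qz irreducible_int_poly_min_degree[OF irr pz]] by blast
  have "poly (map_poly of_int (smult c q)) w = poly (map_poly of_int (p * s)) w"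
    using cs(2) by simp
  with pw have "of_int c * poly (map_poly of_int q) w = (0 :: complex)"
    by (simp add: map_poly_of_int_mult map_poly_smult)
  with cs(1) show ?thesis by simp
qed

definition signed_sum ::
    "(nat \<Rightarrow> 'a::ring_1) \<Rightarrow> nat set \<Rightarrow> (nat \<Rightarrow> int) \<Rightarrow> (nat \<Rightarrow> nat) \<Rightarrow> 'a" where
  "signed_sum f J eps ix = (\<Sum>j\<in>J. of_int (eps j) * f (ix j))"

definition bounded_int_poly_values :: "real \<Rightarrow> nat \<Rightarrow> nat \<Rightarrow> real set" where
  "bounded_int_poly_values x B M =
     (\<lambda>a. \<Sum>k\<le>B. of_int (a k) * x ^ k) ` PiE {..B} (\<lambda>_. {-int M..int M})"

lemma signed_sum_subset_diff:
  "finite J \<Longrightarrow> I \<subseteq> J \<Longrightarrow>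
     signed_sum f J eps ix = signed_sum f I eps ix + signed_sum f (J - I) eps ix"
  unfolding signed_sum_def by (simp add: sum.subset_diff add.commute)

lemma finite_bounded_int_poly_values: "finite (bounded_int_poly_values x B M)"
  by (simp add: bounded_int_poly_values_def finite_PiE)

lemma signed_power_sum_factor:
  fixes x :: real
  assumes fin: "finite J" and card: "card J \<le> M"
    and ix: "\<forall>j\<in>J. \<bar>eps j\<bar> \<le> 1 \<and> n \<le> ix j \<and> ix j \<le> n + B"
  obtains v where "v \<in> bounded_int_poly_values x B M" "signed_sum (power x) J eps ix = x ^ n * v"
proof -
  define J_at where "J_at k = {j\<in>J. ix j - n = k}" for k
  define a where "a = restrict (\<lambda>k. \<Sum>j\<in>J_at k. eps j) {..B}"
  have "(\<Sum>j\<in>J_at k. eps j) \<in> {-int M..int M}" for k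
  proof -
    have "\<bar>\<Sum>j\<in>J_at k. eps j\<bar> \<le> (\<Sum>j\<in>J_at k. \<bar>eps j\<bar>)"
      by (rule sum_abs)
    also have "\<dots> \<le> (\<Sum>j\<in>J_at k. 1)"
      by (rule sum_mono) (use ix in \<open>auto simp: J_at_def\<close>)
    also have "\<dots> \<le> int (card J)" using fin by (simp add: J_at_def card_mono)
    finally show ?thesis using card by (auto simp: abs_le_iff)
  qed
  then have "a \<in> PiE {..B} (\<lambda>_. {-int M..int M})"
    by (simp add: a_def)
  then have "(\<Sum>k\<le>B. of_int (a k) * x ^ k) \<in> bounded_int_poly_values x B M"
    unfolding bounded_int_poly_values_def by blast
  moreover have "signed_sum (power x) J eps ix = x ^ n * (\<Sum>k\<le>B. of_int (a k) * x ^ k)"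
  proof -
    have "signed_sum (power x) J eps ix = (\<Sum>j\<in>J. x ^ n * (of_int (eps j) * x ^ (ix j - n)))"
      unfolding signed_sum_def
      by (intro sum.cong refl) (use ix in \<open>simp flip: power_add\<close>)
    also have "\<dots> = x ^ n * (\<Sum>k\<le>B. \<Sum>j\<in>J_at k. of_int (eps j) * x ^ (ix j - n))"
      unfolding J_at_def
      by (subst sum.group[symmetric, of J "{..B}" "\<lambda>j. ix j - n"])
         (use fin ix in \<open>auto simp: sum_distrib_left\<close>)
    also have "\<dots> = x ^ n * (\<Sum>k\<le>B. of_int (a k) * x ^ k)"
      by (auto simp: a_def J_at_def sum_distrib_right intro!: sum.cong)
    finally show ?thesis .
  qed
  ultimately show thesis using that by blast
qed

lemma finite_nonzero_abs_lower_bound: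
  fixes V :: "real set"
  assumes "finite V"
  obtains \<delta> where "\<delta> > 0" "\<And>v. v \<in> V \<Longrightarrow> v \<noteq> 0 \<Longrightarrow> \<delta> \<le> \<bar>v\<bar>"
proof
  show "Min (insert 1 (abs ` (V - {0}))) > 0" using assms by (subst Min_gr_iff) auto
  show "Min (insert 1 (abs ` (V - {0}))) \<le> \<bar>v\<bar>" if "v \<in> V" "v \<noteq> 0" for v
    using assms that by (intro Min_le) auto
qed

lemma signed_power_sum_lower_bound:
  fixes x :: real
  assumes "0 < x"
  obtains \<delta> where "\<delta> > 0"
    "\<And>J eps ix n. finite J \<Longrightarrow> card J \<le> M \<Longrightarrow>
       \<forall>j\<in>J. \<bar>eps j\<bar> \<le> 1 \<and> n \<le> ix j \<and> ix j \<le> n + B \<Longrightarrow>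
       signed_sum (power x) J eps ix \<noteq> 0 \<Longrightarrow>
       \<delta> * x ^ n \<le> \<bar>signed_sum (power x) J eps ix\<bar>"
proof -
  obtain \<delta> where \<delta>: "\<delta> > 0"
    "\<And>v. v \<in> bounded_int_poly_values x B M \<Longrightarrow> v \<noteq> 0 \<Longrightarrow> \<delta> \<le> \<bar>v\<bar>"
    using finite_nonzero_abs_lower_bound[OF finite_bounded_int_poly_values] by blast
  show thesis
  proof (rule that[OF \<delta>(1)])
    fix J eps ix n
    assume "finite J" "card J \<le> M" "\<forall>j\<in>J. \<bar>eps j\<bar> \<le> 1 \<and> n \<le> ix j \<and> ix j \<le> n + B"
      and nonzero: "signed_sum (power x) J eps ix \<noteq> 0"
    then obtain v where v: "v \<in> bounded_int_poly_values x B M" "signed_sum (power x) J eps ix = x ^ n * v"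
      using signed_power_sum_factor by blast
    with nonzero have "\<delta> \<le> \<bar>v\<bar>" using \<delta>(2) by simp
    with v(2) assms show "\<delta> * x ^ n \<le> \<bar>signed_sum (power x) J eps ix\<bar>"
      by (simp add: abs_mult mult.commute mult_right_mono)
  qed
qed

lemma power_dominated_eventually:
  fixes \<theta> x C \<epsilon> :: real
  assumes "0 \<le> \<theta>" "\<theta> < x" "\<epsilon> > 0"
  obtains N where "\<And>n. N \<le> n \<Longrightarrow> C * \<theta> ^ n \<le> \<epsilon> * x ^ n"
proof -
  have "(\<lambda>n. C * (\<theta> / x) ^ n) \<longlonglongrightarrow> 0"
    using assms by (intro tendsto_mult_right_zero LIMSEQ_power_zero) auto
  then have "eventually (\<lambda>n. C * (\<theta> / x) ^ n < \<epsilon>) sequentially"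
    using assms(3) by (rule order_tendstoD)
  then obtain N where N: "\<And>n. N \<le> n \<Longrightarrow> C * (\<theta> / x) ^ n < \<epsilon>"
    by (auto simp: eventually_sequentially)
  show thesis
  proof (rule that)
    fix n assume "N \<le> n"
    have "C * \<theta> ^ n = C * (\<theta> / x) ^ n * x ^ n"
      using assms by (simp add: power_divide)
    also have "\<dots> \<le> \<epsilon> * x ^ n"
      using N[OF \<open>N \<le> n\<close>] assms by (intro mult_right_mono) auto
    finally show "C * \<theta> ^ n \<le> \<epsilon> * x ^ n" .
  qed
qed

lemma powr_diff_le_mult_power:
  fixes x \<epsilon> :: real
  assumes "1 < x" "0 < \<epsilon>"
  obtains L where "\<And>n. x powr (real n - real L) \<le> \<epsilon> * x ^ n"
proof -
  obtain L where L: "1 / \<epsilon> < x ^ L" using real_arch_pow[OF assms(1)] by blast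
  show thesis
  proof (rule that)
    fix n
    have "x powr (real n - real L) = x ^ n / x ^ L"
      using assms by (simp add: powr_diff powr_realpow)
    also have "\<dots> \<le> \<epsilon> * x ^ n"
      using L assms by (simp add: field_simps)
    finally show "x powr (real n - real L) \<le> \<epsilon> * x ^ n" .
  qed
qed

lemma mult_power_le_powr_diff:
  fixes x C :: real
  assumes "1 < x" "C * x ^ L \<le> x ^ G" "N + G \<le> k"
  shows "C * x ^ N \<le> x powr (real k - real L)"
proof -
  have "C * x ^ N = C * x ^ L * x ^ N / x ^ L" using assms by simp
  also have "\<dots> \<le> x ^ G * x ^ N / x ^ L"
    using assms by (intro divide_right_mono mult_right_mono) auto
  also have "\<dots> = x ^ (N + G) / x ^ L"
    by (simp add: power_add)
  also have "\<dots> \<le> x ^ k / x ^ L"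
    using assms by (intro divide_right_mono power_increasing) auto
  also have "\<dots> = x powr (real k - real L)"
    using assms by (simp add: powr_diff powr_realpow)
  finally show ?thesis .
qed

lemma exists_gap:
  fixes ix :: "nat \<Rightarrow> nat"
  assumes fin: "finite J" and card: "card J \<le> Suc m" and j0: "j0 \<in> J" "ix j0 \<le> n"
  shows "\<exists>t\<le>m. \<forall>j\<in>J. ix j \<le> n + t * G \<or> n + Suc t * G < ix j"
proof (rule ccontr)
  assume "\<not> ?thesis"
  then have occupied: "\<exists>j\<in>J. n + t * G < ix j \<and> ix j \<le> n + Suc t * G" if "t \<le> m" for t
    using that by (meson not_le)
  define below where "below t = {j\<in>J. ix j \<le> n + t * G}" for t
  have counting: "Suc t \<le> card (below t)" if "t \<le> Suc m" for t
    using that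
  proof (induction t)
    case 0
    have "j0 \<in> below 0" using j0 by (simp add: below_def)
    then show ?case using fin by (auto simp: below_def Suc_le_eq card_gt_0_iff)
  next
    case (Suc t)
    then obtain j where j: "j \<in> J" "n + t * G < ix j" "ix j \<le> n + Suc t * G"
      using occupied by force
    have "j \<in> below (Suc t) - below t"
      using j by (simp add: below_def)
    then have "below t \<subset> below (Suc t)"
      by (auto simp: below_def)
    then have "card (below t) < card (below (Suc t))"
      using fin by (intro psubset_card_mono) (auto simp: below_def)
    with Suc show ?case by simp
  qed
  have "card (below (Suc m)) \<le> card J"
    using fin by (intro card_mono) (auto simp: below_def)
  with counting[of "Suc m"] card show False by simp
qed

lemma exists_gap_split:
  fixes ix :: "nat \<Rightarrow> nat"
  assumes fin: "finite J" and ne: "J \<noteq> {}" and card: "card J \<le> Suc m"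
  obtains I N where "I \<subseteq> J" "I \<noteq> {}" "Min (ix ` I) = Min (ix ` J)"
    "Min (ix ` J) \<le> N" "N \<le> Min (ix ` J) + m * G"
    "\<forall>j\<in>I. ix j \<le> N" "\<forall>j\<in>J - I. N + G < ix j"
proof -
  define n where "n = Min (ix ` J)"
  have "n \<in> ix ` J" using fin ne by (simp add: n_def)
  then obtain j0 where j0: "j0 \<in> J" "ix j0 = n" by blast
  obtain t where t: "t \<le> m" "\<forall>j\<in>J. ix j \<le> n + t * G \<or> n + Suc t * G < ix j"
    using exists_gap[OF fin card j0(1)] j0(2) by blast
  define I where "I = {j\<in>J. ix j \<le> n + t * G}"
  have I: "I \<subseteq> J" "j0 \<in> I" using j0 by (auto simp: I_def)
  have "n \<in> ix ` I" using I(2) j0(2) by force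
  then have "Min (ix ` I) = n"
    using fin I(1) unfolding n_def by (intro Min_eqI) (auto dest: finite_subset intro: Min_le)
  show thesis
  proof (rule that[of I "n + t * G"])
    show "\<forall>j\<in>J - I. n + t * G + G < ix j"
      using t(2) by (auto simp: I_def)
  qed (use I \<open>Min (ix ` I) = n\<close> t(1) in \<open>auto simp: I_def n_def\<close>)
qed

locale dominant_root_lrs =
  fixes d :: nat and p :: "int poly" and lam c :: "nat \<Rightarrow> complex"
  assumes irred: "irreducible p"
    and roots: "map_poly of_int p = smult (of_int (lead_coeff p)) (\<Prod>i=1..d. [:- lam i, 1:])"
    and real1: "Im (lam 1) = 0"
    and gt1: "Re (lam 1) > 1"
    and dom: "\<forall>i\<in>{2..d}. cmod (lam i) < Re (lam 1)"
    and c1: "c 1 \<noteq> 0"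
    and posint: "\<forall>n\<ge>1. \<exists>k::int. k > 0 \<and> lrs d c lam n = of_int k"
begin

definition eta :: real where "eta = Re (lam 1)"

definition a :: "nat \<Rightarrow> real" where "a n = Re (lrs d c lam n)"

definition c_norm :: real where "c_norm = (\<Sum>i=1..d. cmod (c i))"

definition zero_or_large :: "nat \<Rightarrow> nat set \<Rightarrow> (nat \<Rightarrow> int) \<Rightarrow> (nat \<Rightarrow> nat) \<Rightarrow> bool" where
  "zero_or_large L J eps ix \<longleftrightarrow>
     (signed_sum a J eps ix = 0 \<and> signed_sum (power eta) J eps ix = 0) \<or>
     eta powr (real (Min (ix ` J)) - real L) \<le> \<bar>signed_sum a J eps ix\<bar>"

definition admissible :: "nat \<Rightarrow> nat \<Rightarrow> nat \<Rightarrow> bool" where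
  "admissible m L K \<longleftrightarrow> (\<forall>J eps ix. finite J \<longrightarrow> card J \<le> m \<longrightarrow>
     (\<forall>j\<in>J. eps j \<in> {-1, 1} \<and> K < ix j) \<longrightarrow> zero_or_large L J eps ix)"

definition window_admissible :: "nat \<Rightarrow> nat \<Rightarrow> nat \<Rightarrow> nat \<Rightarrow> bool" where
  "window_admissible M B L K \<longleftrightarrow> (\<forall>J eps ix. finite J \<longrightarrow> card J \<le> M \<longrightarrow>
     (\<forall>j\<in>J. eps j \<in> {-1, 1} \<and> K < ix j \<and> ix j \<le> Min (ix ` J) + B) \<longrightarrow>
     zero_or_large L J eps ix)"

lemma eta_gt_1: "1 < eta"
  using gt1 by (simp add: eta_def)

lemma lam_1_eq: "lam (Suc 0) = of_real eta"
  using real1 by (simp add: eta_def complex_eq_iff)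

lemma d_ge_1: "1 \<le> d"
proof (rule ccontr)
  assume "\<not> 1 \<le> d"
  moreover obtain k :: int where "k > 0" "lrs d c lam 1 = of_int k" using posint by auto
  ultimately show False by (simp add: lrs_def)
qed

lemma lrs_eq_of_real: "1 \<le> n \<Longrightarrow> lrs d c lam n = of_real (a n)"
  using posint by (force simp: a_def)

lemma root_of_p: "i \<in> {1..d} \<Longrightarrow> poly (map_poly of_int p) (lam i) = 0"
  by (subst roots) (auto simp: poly_prod)

lemma signed_sum_a_eq_0:
  assumes "signed_sum (power eta) J eps ix = 0"
  shows "signed_sum a J eps ix = 0"
proof -
  define q where "q = (\<Sum>j\<in>J. monom (eps j) (ix j))"
  have q: "poly (map_poly of_int q) z = (\<Sum>j\<in>J. of_int (eps j) * z ^ ix j)" for z :: complex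
    unfolding q_def by (rule poly_map_poly_of_int_sum_monom)
  have "poly (map_poly of_int q) (lam 1) = of_real (signed_sum (power eta) J eps ix)"
    by (simp add: q lam_1_eq signed_sum_def)
  then have q_1: "poly (map_poly of_int q) (lam 1) = 0" using assms by simp
  have "1 \<in> {1..d}" using d_ge_1 by simp
  from irreducible_int_poly_shared_roots[OF irred root_of_p[OF this] root_of_p q_1]
  have q_roots: "(\<Sum>j\<in>J. of_int (eps j) * lam i ^ ix j) = 0" if "i \<in> {1..d}" for i
    using that by (simp add: q)
  have "signed_sum a J eps ix = Re (\<Sum>j\<in>J. of_int (eps j) * lrs d c lam (ix j))"
    by (simp add: signed_sum_def a_def)
  also have "\<dots> = Re (\<Sum>i=1..d. c i * (\<Sum>j\<in>J. of_int (eps j) * lam i ^ ix j))"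
    by (simp add: lrs_def sum_distrib_left sum.swap[of _ J] algebra_simps)
  also have "\<dots> = 0" using q_roots by simp
  finally show ?thesis .
qed

lemma c_norm_pos: "0 < c_norm"
proof -
  have "cmod (c 1) \<le> c_norm"
    unfolding c_norm_def using d_ge_1 by (intro member_le_sum) auto
  moreover have "0 < cmod (c 1)" using c1 by simp
  ultimately show ?thesis by linarith
qed

lemma norm_lam_lt_eta: "i \<in> {2..d} \<Longrightarrow> cmod (lam i) < eta"
  using dom by (simp add: eta_def)

lemma norm_lam_le_eta: "i \<in> {1..d} \<Longrightarrow> cmod (lam i) \<le> eta"
  using norm_lam_lt_eta eta_gt_1 by (cases "i = 1") (auto simp: lam_1_eq less_imp_le)

lemma abs_a_le: "\<bar>a n\<bar> \<le> c_norm * eta ^ n"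
proof -
  have "\<bar>a n\<bar> \<le> cmod (lrs d c lam n)" unfolding a_def by (rule abs_Re_le_cmod)
  also have "\<dots> \<le> (\<Sum>i=1..d. cmod (c i * lam i ^ n))" unfolding lrs_def by (rule norm_sum)
  also have "\<dots> \<le> (\<Sum>i=1..d. cmod (c i) * eta ^ n)"
    by (intro sum_mono) (auto simp: norm_mult norm_power intro!: mult_left_mono power_mono norm_lam_le_eta)
  also have "\<dots> = c_norm * eta ^ n" by (simp add: c_norm_def sum_distrib_right)
  finally show ?thesis .
qed

lemma abs_signed_sum_a_le:
  assumes "\<forall>j\<in>J. \<bar>eps j\<bar> \<le> 1 \<and> ix j \<le> N"
  shows "\<bar>signed_sum a J eps ix\<bar> \<le> card J * c_norm * eta ^ N"
proof -
  have "\<bar>signed_sum a J eps ix\<bar> \<le> (\<Sum>j\<in>J. \<bar>of_int (eps j) * a (ix j)\<bar>)"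
    unfolding signed_sum_def by (rule sum_abs)
  also have "\<dots> \<le> (\<Sum>j\<in>J. c_norm * eta ^ N)"
  proof (rule sum_mono)
    fix j assume j: "j \<in> J"
    have "\<bar>of_int (eps j) * a (ix j)\<bar> \<le> 1 * (c_norm * eta ^ ix j)"
      unfolding abs_mult using assms j abs_a_le by (intro mult_mono) auto
    also have "\<dots> \<le> c_norm * eta ^ N"
      using assms j c_norm_pos eta_gt_1 by (auto intro!: mult_left_mono power_increasing)
    finally show "\<bar>of_int (eps j) * a (ix j)\<bar> \<le> c_norm * eta ^ N" .
  qed
  finally show ?thesis by simp
qed

lemma subdominant_bound:
  obtains \<theta> where "1 \<le> \<theta>" "\<theta> < eta" "\<And>i. i \<in> {2..d} \<Longrightarrow> cmod (lam i) \<le> \<theta>"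
proof
  let ?\<theta> = "Max (insert 1 ((\<lambda>i. cmod (lam i)) ` {2..d}))"
  show "1 \<le> ?\<theta>" by simp
  show "?\<theta> < eta" using eta_gt_1 norm_lam_lt_eta by simp
  show "cmod (lam i) \<le> ?\<theta>" if "i \<in> {2..d}" for i using that by (intro Max_ge) auto
qed

lemma signed_sum_a_minus_leading_term:
  assumes ix: "\<forall>j\<in>J. \<bar>eps j\<bar> \<le> 1 \<and> 1 \<le> ix j \<and> ix j \<le> N"
    and \<theta>: "1 \<le> \<theta>" "\<And>i. i \<in> {2..d} \<Longrightarrow> cmod (lam i) \<le> \<theta>"
  shows "cmod (of_real (signed_sum a J eps ix) - c 1 * of_real (signed_sum (power eta) J eps ix))
           \<le> card J * c_norm * \<theta> ^ N"
proof -
  have lrs_split: "lrs d c lam k = c 1 * of_real eta ^ k + (\<Sum>i=2..d. c i * lam i ^ k)" for k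
    unfolding lrs_def using d_ge_1 by (simp add: sum.atLeast_Suc_atMost numeral_2_eq_2 lam_1_eq)
  have "of_real (signed_sum a J eps ix) - c 1 * of_real (signed_sum (power eta) J eps ix)
      = (\<Sum>j\<in>J. of_int (eps j) * (\<Sum>i=2..d. c i * lam i ^ ix j))"
    using ix by (simp add: signed_sum_def lrs_eq_of_real [symmetric] lrs_split
        algebra_simps sum.distrib sum_distrib_left)
  also have "cmod \<dots> \<le> (\<Sum>j\<in>J. \<Sum>i=2..d. cmod (c i) * \<theta> ^ N)"
  proof (intro order.trans[OF norm_sum] sum_mono)
    fix j assume j: "j \<in> J"
    have "cmod (of_int (eps j) * (\<Sum>i=2..d. c i * lam i ^ ix j)) \<le> cmod (\<Sum>i=2..d. c i * lam i ^ ix j)"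
      unfolding norm_mult using ix j by (intro mult_left_le_one_le) auto
    also have "\<dots> \<le> (\<Sum>i=2..d. cmod (c i * lam i ^ ix j))"
      by (rule norm_sum)
    also have "\<dots> \<le> (\<Sum>i=2..d. cmod (c i) * \<theta> ^ N)"
    proof (rule sum_mono)
      fix i assume i: "i \<in> {2..d}"
      have "cmod (lam i) ^ ix j \<le> \<theta> ^ ix j" using \<theta> i by (intro power_mono) auto
      also have "\<dots> \<le> \<theta> ^ N" using \<theta> ix j by (intro power_increasing) auto
      finally show "cmod (c i * lam i ^ ix j) \<le> cmod (c i) * \<theta> ^ N"
        by (simp add: norm_mult norm_power mult_left_mono)
    qed
    finally show "cmod (of_int (eps j) * (\<Sum>i=2..d. c i * lam i ^ ix j))
        \<le> (\<Sum>i=2..d. cmod (c i) * \<theta> ^ N)" .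
  qed
  also have "\<dots> \<le> (\<Sum>j\<in>J. c_norm * \<theta> ^ N)"
    unfolding c_norm_def sum_distrib_right[symmetric] using \<theta>
    by (intro sum_mono mult_right_mono sum_mono2) auto
  finally show ?thesis by simp
qed

lemma leading_term_dominates:
  assumes ix: "\<forall>j\<in>J. \<bar>eps j\<bar> \<le> 1 \<and> 1 \<le> ix j \<and> ix j \<le> N"
    and \<theta>: "1 \<le> \<theta>" "\<And>i. i \<in> {2..d} \<Longrightarrow> cmod (lam i) \<le> \<theta>"
    and small: "card J * c_norm * \<theta> ^ N \<le> \<epsilon>"
    and large: "2 * \<epsilon> \<le> cmod (c 1) * \<bar>signed_sum (power eta) J eps ix\<bar>"
  shows "\<epsilon> \<le> \<bar>signed_sum a J eps ix\<bar>"
proof -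
  let ?S = "of_real (signed_sum a J eps ix) :: complex"
  let ?T = "c 1 * of_real (signed_sum (power eta) J eps ix)"
  have "cmod (?S - ?T) \<le> \<epsilon>"
    using signed_sum_a_minus_leading_term[OF ix \<theta>] small by linarith
  moreover have "cmod ?T - cmod ?S \<le> cmod (?S - ?T)"
    using norm_triangle_ineq2[of ?T ?S] by (simp add: norm_minus_commute)
  ultimately show ?thesis
    using large by (simp add: norm_mult)
qed

lemma zero_or_large_mono:
  assumes "zero_or_large L J eps ix" "L \<le> L'"
  shows "zero_or_large L' J eps ix"
proof -
  have "eta powr (x - real L') \<le> eta powr (x - real L)" for x
    using eta_gt_1 assms(2) by (intro powr_mono) auto
  with assms(1) show ?thesis
    unfolding zero_or_large_def by (meson order.trans)
qed

lemma window_admissible_exists: "\<exists>L K. window_admissible M B L K"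
proof -
  obtain \<theta> where \<theta>: "1 \<le> \<theta>" "\<theta> < eta" "\<And>i. i \<in> {2..d} \<Longrightarrow> cmod (lam i) \<le> \<theta>"
    using subdominant_bound by blast
  obtain \<delta> where \<delta>: "\<delta> > 0"
    and leading: "\<And>J eps ix n. finite J \<Longrightarrow> card J \<le> M \<Longrightarrow>
       \<forall>j\<in>J. \<bar>eps j\<bar> \<le> 1 \<and> n \<le> ix j \<and> ix j \<le> n + B \<Longrightarrow>
       signed_sum (power eta) J eps ix \<noteq> 0 \<Longrightarrow>
       \<delta> * eta ^ n \<le> \<bar>signed_sum (power eta) J eps ix\<bar>"
    using signed_power_sum_lower_bound[where x = eta and M = M and B = B] eta_gt_1 by auto
  define \<epsilon> where "\<epsilon> = cmod (c 1) * \<delta> / 2"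
  have \<epsilon>: "\<epsilon> > 0" using c1 \<delta> by (simp add: \<epsilon>_def)
  obtain K where K: "\<And>n. K \<le> n \<Longrightarrow> (M * c_norm * \<theta> ^ B) * \<theta> ^ n \<le> \<epsilon> * eta ^ n"
    using power_dominated_eventually[of \<theta> eta \<epsilon>] \<theta> \<epsilon> by auto
  obtain L where L: "\<And>n. eta powr (real n - real L) \<le> \<epsilon> * eta ^ n"
    using powr_diff_le_mult_power[OF eta_gt_1 \<epsilon>] by blast
  have "window_admissible M B L K"
    unfolding window_admissible_def
  proof (intro allI impI)
    fix J :: "nat set" and eps :: "nat \<Rightarrow> int" and ix :: "nat \<Rightarrow> nat"
    assume fin: "finite J" and card: "card J \<le> M"
      and ix: "\<forall>j\<in>J. eps j \<in> {-1, 1} \<and> K < ix j \<and> ix j \<le> Min (ix ` J) + B"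
    show "zero_or_large L J eps ix"
    proof (cases "signed_sum (power eta) J eps ix = 0")
      case True
      then show ?thesis by (simp add: zero_or_large_def signed_sum_a_eq_0)
    next
      case False
      define n where "n = Min (ix ` J)"
      have "J \<noteq> {}" using False by (auto simp: signed_sum_def)
      then have "n \<in> ix ` J" using fin by (simp add: n_def)
      then have "K \<le> n" using ix by force
      have window: "\<forall>j\<in>J. \<bar>eps j\<bar> \<le> 1 \<and> n \<le> ix j \<and> ix j \<le> n + B"
        using ix fin by (auto simp: n_def)
      have "card J * c_norm * \<theta> ^ (n + B) \<le> (M * c_norm * \<theta> ^ B) * \<theta> ^ n"
        using card c_norm_pos \<theta> by (simp add: power_add mult_right_mono)
      also have "\<dots> \<le> \<epsilon> * eta ^ n" using K[OF \<open>K \<le> n\<close>] .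
      finally have small: "card J * c_norm * \<theta> ^ (n + B) \<le> \<epsilon> * eta ^ n" .
      have "2 * (\<epsilon> * eta ^ n) \<le> cmod (c 1) * \<bar>signed_sum (power eta) J eps ix\<bar>"
        using mult_left_mono[OF leading[OF fin card window False], of "cmod (c 1)"]
        by (simp add: \<epsilon>_def mult.assoc)
      with small have "\<epsilon> * eta ^ n \<le> \<bar>signed_sum a J eps ix\<bar>"
        using window ix \<theta> by (intro leading_term_dominates) auto
      then show ?thesis
        using L[of n] unfolding zero_or_large_def n_def by simp
    qed
  qed
  then show ?thesis by blast
qed

lemma admissible_mono:
  assumes adm: "admissible m L K" and "m' \<le> m" "L \<le> L'" "K \<le> K'"
  shows "admissible m' L' K'"
  unfolding admissible_def
proof (intro allI impI)
  fix J :: "nat set" and eps :: "nat \<Rightarrow> int" and ix :: "nat \<Rightarrow> nat"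
  assume J: "finite J" "card J \<le> m'" and ix: "\<forall>j\<in>J. eps j \<in> {-1, 1} \<and> K' < ix j"
  have "card J \<le> m" using J(2) assms(2) by linarith
  moreover have "\<forall>j\<in>J. eps j \<in> {-1, 1} \<and> K < ix j"
    using ix assms(4) by (simp add: le_less_trans)
  ultimately have "zero_or_large L J eps ix"
    using adm J(1) unfolding admissible_def by simp
  then show "zero_or_large L' J eps ix"
    using assms(3) by (rule zero_or_large_mono)
qed

lemma admissible_0: "admissible 0 0 0"
  by (simp add: admissible_def zero_or_large_def signed_sum_def)

lemma zero_or_large_vanishing_rest:
  assumes "zero_or_large L I eps ix" "finite J" "I \<subseteq> J" "I \<noteq> {}"
    and "signed_sum a (J - I) eps ix = 0" "signed_sum (power eta) (J - I) eps ix = 0"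
  shows "zero_or_large L J eps ix"
proof -
  have "Min (ix ` J) \<le> Min (ix ` I)"
    using assms(2-4) by (intro Min_antimono) (auto dest: finite_subset)
  then have "eta powr (real (Min (ix ` J)) - real L) \<le> eta powr (real (Min (ix ` I)) - real L)"
    using eta_gt_1 by (intro powr_mono) auto
  with assms show ?thesis
    unfolding zero_or_large_def by (auto simp: signed_sum_subset_diff[OF assms(2,3)])
qed

lemma dominant_rest_lower_bound:
  assumes G: "2 * M * c_norm * eta ^ L \<le> eta ^ G"
    and I: "card I \<le> M" "\<forall>j\<in>I. \<bar>eps j\<bar> \<le> 1 \<and> ix j \<le> N"
    and rest: "N + G \<le> Min (ix ` R)" "eta powr (real (Min (ix ` R)) - real L) \<le> \<bar>signed_sum a R eps ix\<bar>"
  shows "M * c_norm * eta ^ N \<le> \<bar>signed_sum a I eps ix + signed_sum a R eps ix\<bar>"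
proof -
  have "\<bar>signed_sum a I eps ix\<bar> \<le> card I * c_norm * eta ^ N"
    using I(2) by (rule abs_signed_sum_a_le)
  also have "\<dots> \<le> M * c_norm * eta ^ N"
    using I(1) c_norm_pos eta_gt_1 by (intro mult_right_mono) auto
  finally have "\<bar>signed_sum a I eps ix\<bar> \<le> M * c_norm * eta ^ N" .
  moreover have "2 * M * c_norm * eta ^ N \<le> \<bar>signed_sum a R eps ix\<bar>"
    using mult_power_le_powr_diff[OF eta_gt_1 G rest(1)] rest(2) by linarith
  ultimately show ?thesis by linarith
qed

lemma admissible_SucI:
  assumes IH: "admissible m L K"
    and G: "2 * real (Suc m) * c_norm * eta ^ L \<le> eta ^ G"
    and window: "window_admissible (Suc m) (m * G) L\<^sub>w K\<^sub>w"
    and L\<^sub>0: "\<And>n. eta powr (real n - real L\<^sub>0) \<le> Suc m * c_norm * eta ^ n"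
  shows "admissible (Suc m) (max L\<^sub>w L\<^sub>0) (max K K\<^sub>w)"
  unfolding admissible_def
proof (intro allI impI)
  fix J :: "nat set" and eps :: "nat \<Rightarrow> int" and ix :: "nat \<Rightarrow> nat"
  assume fin: "finite J" and card: "card J \<le> Suc m"
    and ix: "\<forall>j\<in>J. eps j \<in> {-1, 1} \<and> max K K\<^sub>w < ix j"
  show "zero_or_large (max L\<^sub>w L\<^sub>0) J eps ix"
  proof (cases "J = {}")
    case True
    then show ?thesis by (simp add: zero_or_large_def signed_sum_def)
  next
    case False
    obtain I N where I: "I \<subseteq> J" "I \<noteq> {}" "Min (ix ` I) = Min (ix ` J)"
      and N: "Min (ix ` J) \<le> N" "N \<le> Min (ix ` J) + m * G"
      and low: "\<forall>j\<in>I. ix j \<le> N" and high: "\<forall>j\<in>J - I. N + G < ix j"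
      using exists_gap_split[OF fin False card, of ix G] by blast
    have "finite I" "card I \<le> Suc m"
      using fin card card_mono[OF fin I(1)] I(1) by (auto dest: finite_subset)
    have ix_I: "\<forall>j\<in>I. eps j \<in> {-1, 1} \<and> max K K\<^sub>w < ix j"
      using ix I(1) by blast
    have "card (J - I) < card J"
      using fin I(1,2) by (intro psubset_card_mono) auto
    then have "zero_or_large L (J - I) eps ix"
      using IH ix card fin unfolding admissible_def by auto
    then consider
        (vanishing) "signed_sum a (J - I) eps ix = 0" "signed_sum (power eta) (J - I) eps ix = 0"
      | (large) "J - I \<noteq> {}"
          "eta powr (real (Min (ix ` (J - I))) - real L) \<le> \<bar>signed_sum a (J - I) eps ix\<bar>"
      unfolding zero_or_large_def by (cases "J - I = {}") (auto simp: signed_sum_def)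
    then show ?thesis
    proof cases
      case vanishing
      have "\<forall>j\<in>I. eps j \<in> {-1, 1} \<and> K\<^sub>w < ix j \<and> ix j \<le> Min (ix ` I) + m * G"
        using ix_I I(3) N(2) low by auto
      with window \<open>finite I\<close> \<open>card I \<le> Suc m\<close> have "zero_or_large L\<^sub>w I eps ix"
        unfolding window_admissible_def by blast
      then have "zero_or_large L\<^sub>w J eps ix"
        by (rule zero_or_large_vanishing_rest[OF _ fin I(1,2) vanishing])
      then show ?thesis by (rule zero_or_large_mono) simp
    next
      case large
      have "N + G \<le> Min (ix ` (J - I))"
        using large(1) fin high by (auto intro: less_imp_le)
      moreover have "\<forall>j\<in>I. \<bar>eps j\<bar> \<le> 1 \<and> ix j \<le> N"
        using ix_I low by auto
      ultimately have "Suc m * c_norm * eta ^ N \<le> \<bar>signed_sum a J eps ix\<bar>"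
        using dominant_rest_lower_bound[OF G \<open>card I \<le> Suc m\<close> _ _ large(2)]
        by (simp add: signed_sum_subset_diff[OF fin I(1)])
      moreover have "Suc m * c_norm * eta ^ Min (ix ` J) \<le> Suc m * c_norm * eta ^ N"
        using N(1) c_norm_pos eta_gt_1 by (intro mult_left_mono power_increasing) auto
      ultimately have "zero_or_large L\<^sub>0 J eps ix"
        using L\<^sub>0[of "Min (ix ` J)"] unfolding zero_or_large_def by linarith
      then show ?thesis by (rule zero_or_large_mono) simp
    qed
  qed
qed

lemma admissible_Suc:
  assumes "admissible m L K"
  shows "\<exists>L' K'. admissible (Suc m) L' K'"
proof -
  obtain G where G: "2 * real (Suc m) * c_norm * eta ^ L \<le> eta ^ G"
    using real_arch_pow[OF eta_gt_1] by (meson less_le)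
  obtain L\<^sub>w K\<^sub>w where "window_admissible (Suc m) (m * G) L\<^sub>w K\<^sub>w"
    using window_admissible_exists by blast
  moreover have "0 < Suc m * c_norm" using c_norm_pos by simp
  then obtain L\<^sub>0 where "\<And>n. eta powr (real n - real L\<^sub>0) \<le> Suc m * c_norm * eta ^ n"
    using powr_diff_le_mult_power[OF eta_gt_1] by blast
  ultimately show ?thesis
    using admissible_SucI[OF assms G] by blast
qed

lemma admissible_exists: "\<exists>L K. admissible m L K"
  by (induction m) (use admissible_0 admissible_Suc in blast)+

lemma admissible_monotone_exists:
  obtains L K :: "nat \<Rightarrow> nat" where "mono L" "mono K" "\<And>m. admissible m (L m) (K m)"
proof -
  obtain L K where LK: "\<And>m. admissible m (L m) (K m)"
    using admissible_exists by metis
  show thesis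
  proof (rule that[of "\<lambda>m. \<Sum>k\<le>m. L k" "\<lambda>m. \<Sum>k\<le>m. K k"])
    show "mono (\<lambda>m. \<Sum>k\<le>m. L k)" "mono (\<lambda>m. \<Sum>k\<le>m. K k)"
      unfolding mono_def by (auto intro: sum_mono2)
    show "admissible m (\<Sum>k\<le>m. L k) (\<Sum>k\<le>m. K k)" for m
      using admissible_mono[OF LK order.refl] by (simp add: member_le_sum)
  qed
qed

end

theorem lemma6p4:
  fixes d :: nat and p :: "int poly"
    and lam c :: "nat \<Rightarrow> complex"
  assumes irred: "irreducible p"
    and deg: "degree p = d"
    and roots: "map_poly of_int p = smult (of_int (lead_coeff p)) (\<Prod>i=1..d. [:- lam i, 1:])"
    and real1: "Im (lam 1) = 0"
    and gt1: "Re (lam 1) > 1"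
    and dom: "\<forall>i\<in>{2..d}. cmod (lam i) < Re (lam 1)"
    and c1: "c 1 \<noteq> 0"
    and posint: "\<forall>n\<ge>1. \<exists>k::int. k > 0 \<and> lrs d c lam n = of_int k"
  shows "\<exists>L3 K3 :: nat \<Rightarrow> nat. mono L3 \<and> mono K3 \<and>
    (\<forall>m. \<forall>(eps :: nat \<Rightarrow> int) (ix :: nat \<Rightarrow> nat).
       (\<forall>j\<in>{1..m}. eps j \<in> {-1, 1} \<and> ix j > K3 m) \<longrightarrow>
       (((\<Sum>j=1..m. of_int (eps j) * Re (lrs d c lam (ix j))) = 0 \<and>
         (\<Sum>j=1..m. of_int (eps j) * Re (lam 1) ^ ix j) = 0)
        \<or> \<bar>\<Sum>j=1..m. of_int (eps j) * Re (lrs d c lam (ix j))\<bar>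
            \<ge> Re (lam 1) powr (real (Min (ix ` {1..m})) - real (L3 m))))"
proof -
  interpret dominant_root_lrs d p lam c
    using irred roots real1 gt1 dom c1 posint by unfold_locales
  obtain L3 K3 where "mono L3" "mono K3" and adm: "\<And>m. admissible m (L3 m) (K3 m)"
    using admissible_monotone_exists by blast
  show ?thesis
  proof (intro exI conjI allI impI)
    fix m and eps :: "nat \<Rightarrow> int" and ix :: "nat \<Rightarrow> nat"
    assume "\<forall>j\<in>{1..m}. eps j \<in> {-1, 1} \<and> ix j > K3 m"
    then have "zero_or_large (L3 m) {1..m} eps ix"
      using adm[of m] unfolding admissible_def by simp
    then show "((\<Sum>j=1..m. of_int (eps j) * Re (lrs d c lam (ix j))) = 0 \<and>
         (\<Sum>j=1..m. of_int (eps j) * Re (lam 1) ^ ix j) = 0)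
        \<or> \<bar>\<Sum>j=1..m. of_int (eps j) * Re (lrs d c lam (ix j))\<bar>
            \<ge> Re (lam 1) powr (real (Min (ix ` {1..m})) - real (L3 m))"
      unfolding zero_or_large_def signed_sum_def a_def eta_def .
  qed fact+
qed

end
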